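(* Let $K$ be any finite index subgroup of $F_2$, and suppose that $K$ contains an element of odd length. Then there is an $N$ such that for every $n\geq N$, $K$ contains an element of length $n$.
   Context: $F_2$ is the free group on $a,b$, $\Xi=\{a,b,a^{-1},b^{-1}\}$, and an element has length $n$ if its reduced word $x_1\cdots x_n$ ($x_i\in\Xi$, $x_{i+1}\neq x_i^{-1}$) has $n$ letters. *)

theory Defs
  imports "HOL-Algebra.Coset"
begin

text \<open>A letter is a pair (g, e) with g a generator and e = True meaning the inverse g^-1.
  So the alphabet Xi = {a, b, a^-1, b^-1} is the type gen \<times> bool.\<close>

datatype gen = Ga | Gb

type_synonym letter = "gen \<times> bool"

definition inv_letter :: "letter \<Rightarrow> letter" where
  "inv_letter x = (fst x, \<not> snd x)"

definition reduced :: "letter list \<Rightarrow> bool" where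
  "reduced w \<longleftrightarrow> (\<forall>i. Suc i < length w \<longrightarrow> w ! Suc i \<noteq> inv_letter (w ! i))"

fun cons_red :: "letter \<Rightarrow> letter list \<Rightarrow> letter list" where
  "cons_red x [] = [x]"
| "cons_red x (y # ys) = (if y = inv_letter x then ys else x # y # ys)"

definition reduce :: "letter list \<Rightarrow> letter list" where
  "reduce w = foldr cons_red w []"

definition F2 :: "letter list monoid" where
  "F2 = \<lparr> carrier = {w. reduced w}, mult = (\<lambda>u v. reduce (u @ v)), one = [] \<rparr>"

definition word_length :: "letter list \<Rightarrow> nat" where
  "word_length w = length w"

end

theory Submission
  imports Defs
begin

text \<open>Let \<open>m\<close> be the index of \<open>K\<close>. By pigeonhole on the cosets \<open>K x\<^sup>i\<close>, \<open>0 \<le> i \<le> m\<close>,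
  every element \<open>x\<close> has a power \<open>x\<^sup>k \<in> K\<close> with \<open>1 \<le> k \<le> m\<close>, so \<open>x\<^sup>D \<in> K\<close> for \<open>D = 2 m!\<close>.
  Applied to conjugates, this puts the reduced words \<open>b\<^sup>j a\<^sup>D b\<^sup>-\<^sup>j\<close> into \<open>K\<close>: they realise
  every even length \<open>\<ge> D\<close>. Multiplying an odd-length word \<open>w \<in> K\<close> on the right by such a
  word, with the sign of \<open>b\<close> chosen so that nothing cancels, realises every large odd length.\<close>

lemma inv_letter_inv_letter [simp]: "inv_letter (inv_letter x) = x"
  by (simp add: inv_letter_def)

lemma inv_letter_neq [simp]: "inv_letter x \<noteq> x" "x \<noteq> inv_letter x"
  by (auto simp: inv_letter_def prod_eq_iff)

lemma reduced_Nil [simp]: "reduced []"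
  by (simp add: reduced_def)

lemma reduced_Cons:
  "reduced (x # xs) \<longleftrightarrow> reduced xs \<and> (xs = [] \<or> hd xs \<noteq> inv_letter x)"
  by (cases xs) (auto simp: reduced_def nth_Cons split: nat.splits)

lemma reduced_append:
  "reduced (u @ v) \<longleftrightarrow>
     reduced u \<and> reduced v \<and> (u = [] \<or> v = [] \<or> hd v \<noteq> inv_letter (last u))"
  by (induction u) (auto simp: reduced_Cons)

lemma reduced_replicate: "reduced (replicate n x)"
  by (induction n) (auto simp: reduced_Cons)

lemma reduced_cons_red: "reduced ys \<Longrightarrow> reduced (cons_red x ys)"
  by (cases ys) (auto simp: reduced_Cons)

lemma reduced_foldr_cons_red: "reduced z \<Longrightarrow> reduced (foldr cons_red w z)"
  by (induction w) (auto intro: reduced_cons_red)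

lemma reduced_reduce: "reduced (reduce w)"
  unfolding reduce_def by (rule reduced_foldr_cons_red) simp

lemma reduce_reduced: "reduced w \<Longrightarrow> reduce w = w"
  unfolding reduce_def
proof (induction w)
  case (Cons x xs)
  then have "foldr cons_red xs [] = xs" by (simp add: reduced_Cons)
  with Cons.prems show ?case by (cases xs) (auto simp: reduced_Cons)
qed simp

lemma cons_red_inv_letter_cancel:
  assumes "reduced ys"
  shows "cons_red x (cons_red (inv_letter x) ys) = ys"
proof (cases ys)
  case (Cons y zs)
  with assms show ?thesis
    by (cases zs) (auto simp: reduced_Cons)
qed simp

lemma reduce_append: "reduce (u @ v) = foldr cons_red u (reduce v)"
  by (simp add: reduce_def)

lemma foldr_cons_red_reduce:
  "reduced z \<Longrightarrow> foldr cons_red (reduce w) z = foldr cons_red w z"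
proof (induction w)
  case Nil
  then show ?case by (simp add: reduce_def)
next
  case (Cons x w)
  have reduce_Cons: "reduce (x # w) = cons_red x (reduce w)"
    by (simp add: reduce_def)
  show ?case
  proof (cases "reduce w")
    case (Cons y r)
    show ?thesis
    proof (cases "y = inv_letter x")
      case True
      have "reduced r"
        using reduced_reduce[of w] Cons by (simp add: reduced_Cons)
      have "foldr cons_red (x # w) z
          = cons_red x (cons_red (inv_letter x) (foldr cons_red r z))"
        using Cons.IH[OF Cons.prems] \<open>reduce w = y # r\<close> True by simp
      also have "\<dots> = foldr cons_red r z"
        by (rule cons_red_inv_letter_cancel[OF reduced_foldr_cons_red[OF Cons.prems]])
      finally show ?thesis
        using reduce_Cons \<open>reduce w = y # r\<close> True by simp
    qed (use reduce_Cons Cons.IH Cons.prems \<open>reduce w = y # r\<close> in simp)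
  qed (use reduce_Cons Cons.IH Cons.prems in simp)
qed

lemma reduce_reduce_append: "reduce (reduce u @ v) = reduce (u @ v)"
  by (simp add: reduce_append foldr_cons_red_reduce reduced_reduce)

lemma reduce_append_reduce: "reduce (u @ reduce v) = reduce (u @ v)"
  by (simp add: reduce_append reduce_reduced reduced_reduce)

lemma reduce_inverse_append: "reduce (rev (map inv_letter u) @ u) = []"
proof (induction u)
  case (Cons x u)
  have "reduce (rev (map inv_letter (x # u)) @ x # u)
      = foldr cons_red (rev (map inv_letter u))
          (cons_red (inv_letter x) (cons_red x (reduce u)))"
    by (simp add: reduce_append reduce_def)
  also have "\<dots> = reduce (rev (map inv_letter u) @ u)"
    using cons_red_inv_letter_cancel[OF reduced_reduce, of "inv_letter x" u]
    by (simp add: reduce_append)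
  finally show ?case
    using Cons.IH by simp
qed (simp add: reduce_def)

lemma F2_carrier: "carrier F2 = {w. reduced w}"
  and F2_mult: "u \<otimes>\<^bsub>F2\<^esub> v = reduce (u @ v)"
  and F2_one: "\<one>\<^bsub>F2\<^esub> = []"
  by (simp_all add: F2_def)

lemma F2_mult_reduced: "reduced (u @ v) \<Longrightarrow> u \<otimes>\<^bsub>F2\<^esub> v = u @ v"
  by (simp add: F2_mult reduce_reduced)

lemma group_F2: "group F2"
proof (rule groupI)
  fix x
  assume "x \<in> carrier F2"
  show "\<exists>y\<in>carrier F2. y \<otimes>\<^bsub>F2\<^esub> x = \<one>\<^bsub>F2\<^esub>"
    by (rule bexI[of _ "reduce (rev (map inv_letter x))"])
      (auto simp: F2_mult F2_one F2_carrier reduced_reduce reduce_reduce_append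
        reduce_inverse_append)
next
  fix x y z
  show "x \<otimes>\<^bsub>F2\<^esub> y \<otimes>\<^bsub>F2\<^esub> z = x \<otimes>\<^bsub>F2\<^esub> (y \<otimes>\<^bsub>F2\<^esub> z)"
    by (simp add: F2_mult reduce_reduce_append reduce_append_reduce)
qed (auto simp: F2_mult F2_one F2_carrier reduced_reduce reduce_reduced)

interpretation F2: group F2
  by (rule group_F2)

lemma F2_inv:
  "x \<in> carrier F2 \<Longrightarrow> inv\<^bsub>F2\<^esub> x = reduce (rev (map inv_letter x))"
  by (rule F2.inv_equality)
    (auto simp: F2_mult F2_one F2_carrier reduced_reduce reduce_reduce_append
      reduce_inverse_append)

lemma F2_inv_replicate: "inv\<^bsub>F2\<^esub> (replicate n x) = replicate n (inv_letter x)"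
  by (simp add: F2_inv F2_carrier reduced_replicate reduce_reduced)

lemma F2_nat_pow_letter: "[x] [^]\<^bsub>F2\<^esub> (n::nat) = replicate n x"
proof (induction n)
  case (Suc n)
  have "replicate n x @ [x] = replicate (Suc n) x"
    by (simp add: replicate_append_same)
  then have "replicate n x \<otimes>\<^bsub>F2\<^esub> [x] = replicate (Suc n) x"
    using F2_mult_reduced reduced_replicate by metis
  with Suc show ?case
    by simp
qed (simp add: F2_one)

lemma (in group) subgroup_nat_pow_closed:
  assumes "subgroup K G" "h \<in> K"
  shows "h [^] (n::nat) \<in> K"
proof (induction n)
  case 0
  show ?case
    using assms(1) by (simp add: subgroup.one_closed)
next
  case (Suc n)
  then show ?case
    using assms by (simp add: subgroup.m_closed)
qed

lemma (in group) conj_nat_pow: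
  assumes "g \<in> carrier G" "x \<in> carrier G"
  shows "(g \<otimes> x \<otimes> inv g) [^] (n::nat) = g \<otimes> x [^] n \<otimes> inv g"
proof (induction n)
  case (Suc n)
  have "inv g \<otimes> (g \<otimes> y) = y" if "y \<in> carrier G" for y
    using assms that by (simp add: m_assoc [symmetric])
  with Suc assms show ?case
    by (simp add: m_assoc)
qed (use assms in simp)

lemma (in group) finite_index_nat_pow_mem:
  assumes K: "subgroup K G" and fin: "finite (rcosets K)" and x: "x \<in> carrier G"
  shows "\<exists>k. 0 < k \<and> k \<le> card (rcosets K) \<and> x [^] k \<in> K"
proof -
  define m where "m = card (rcosets K)"
  define f where "f i = K #> x [^] (i::nat)" for i
  have "f ` {0..m} \<subseteq> rcosets K"
    using subgroup.subset[OF K] x unfolding f_def by (auto intro: rcosetsI)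
  then have "card (f ` {0..m}) < card {0..m}"
    using card_mono[OF fin] unfolding m_def by (simp add: le_imp_less_Suc)
  then have "\<not> inj_on f {0..m}"
    by (rule pigeonhole)
  then obtain i j where ij: "i \<in> {0..m}" "j \<in> {0..m}" "i \<noteq> j" "f i = f j"
    unfolding inj_on_def by blast
  have coset_eq: "x [^] (l - k) \<in> K" if "k < l" "f k = f l" for k l
  proof -
    have "x [^] l \<in> K #> x [^] k"
      using repr_independenceD[OF K] that x unfolding f_def by simp
    then have "x [^] l \<otimes> inv (x [^] k) \<in> K"
      using subgroup.rcos_module_imp[OF K is_group] x by simp
    moreover have "x [^] l = x [^] (l - k) \<otimes> x [^] k"
      using nat_pow_mult[OF x, of "l - k" k] that by simp
    ultimately show ?thesis
      using x by (simp add: m_assoc)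
  qed
  show ?thesis
  proof (cases "i < j")
    case True
    then show ?thesis
      using ij coset_eq[of i j] unfolding m_def by (intro exI[of _ "j - i"]) auto
  next
    case False
    then show ?thesis
      using ij coset_eq[of j i] unfolding m_def by (intro exI[of _ "i - j"]) auto
  qed
qed

lemma (in group) finite_index_nat_pow_fact_dvd_mem:
  assumes K: "subgroup K G" and fin: "finite (rcosets K)" and x: "x \<in> carrier G"
    and n: "fact (card (rcosets K)) dvd n"
  shows "x [^] (n::nat) \<in> K"
proof -
  obtain k where k: "0 < k" "k \<le> card (rcosets K)" "x [^] k \<in> K"
    using finite_index_nat_pow_mem[OF K fin x] by blast
  have "k dvd n"
    using dvd_fact[of k "card (rcosets K)"] k n by (auto intro: dvd_trans)
  then obtain q where "n = k * q" ..
  then show ?thesis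
    using subgroup_nat_pow_closed[OF K k(3), of q] x by (simp add: nat_pow_pow)
qed

lemma (in group) finite_index_conj_nat_pow_mem:
  assumes K: "subgroup K G" and fin: "finite (rcosets K)"
    and g: "g \<in> carrier G" and x: "x \<in> carrier G"
    and n: "fact (card (rcosets K)) dvd n"
  shows "g \<otimes> x [^] (n::nat) \<otimes> inv g \<in> K"
  using finite_index_nat_pow_fact_dvd_mem[OF K fin _ n, of "g \<otimes> x \<otimes> inv g"] g x
  by (simp add: conj_nat_pow)

definition conj_pow_word :: "letter \<Rightarrow> nat \<Rightarrow> letter \<Rightarrow> nat \<Rightarrow> letter list" where
  "conj_pow_word y j x D = replicate j y @ replicate D x @ replicate j (inv_letter y)"

lemma length_conj_pow_word: "length (conj_pow_word y j x D) = D + 2 * j"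
  by (simp add: conj_pow_word_def)

lemma hd_conj_pow_word: "0 < j \<Longrightarrow> hd (conj_pow_word y j x D) = y"
  by (cases j) (simp_all add: conj_pow_word_def)

lemma reduced_conj_pow_word:
  assumes "fst x \<noteq> fst y" "0 < D"
  shows "reduced (conj_pow_word y j x D)"
  using assms
  by (cases "j = 0")
    (auto simp: conj_pow_word_def reduced_append reduced_replicate inv_letter_def prod_eq_iff)

lemma conj_pow_word_eq_conj:
  assumes "fst x \<noteq> fst y" "0 < D"
  shows "conj_pow_word y j x D
    = replicate j y \<otimes>\<^bsub>F2\<^esub> [x] [^]\<^bsub>F2\<^esub> D \<otimes>\<^bsub>F2\<^esub> inv\<^bsub>F2\<^esub> (replicate j y)"
proof -
  have "reduced ((replicate j y @ replicate D x) @ replicate j (inv_letter y))"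
    using reduced_conj_pow_word[OF assms] by (simp add: conj_pow_word_def)
  then show ?thesis
    by (simp add: conj_pow_word_def F2_nat_pow_letter F2_inv_replicate F2_mult_reduced
        reduced_append del: append_assoc)
qed

lemma conj_pow_word_mem:
  assumes K: "subgroup K F2" and fin: "finite (rcosets\<^bsub>F2\<^esub> K)"
    and D: "fact (card (rcosets\<^bsub>F2\<^esub> K)) dvd D" "0 < D" and xy: "fst x \<noteq> fst y"
  shows "conj_pow_word y j x D \<in> K"
  using F2.finite_index_conj_nat_pow_mem[OF K fin _ _ D(1), of "replicate j y" "[x]"]
  by (simp add: conj_pow_word_eq_conj[OF xy D(2)] F2_carrier reduced_replicate reduced_Cons)

lemma append_conj_pow_word_mem:
  assumes K: "subgroup K F2" and fin: "finite (rcosets\<^bsub>F2\<^esub> K)"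
    and D: "fact (card (rcosets\<^bsub>F2\<^esub> K)) dvd D" "0 < D" and x: "fst x \<noteq> g"
    and w: "w \<in> K" "w \<noteq> []" and j: "0 < j"
  shows "w @ conj_pow_word (g, snd (last w)) j x D \<in> K"
proof -
  let ?c = "conj_pow_word (g, snd (last w)) j x D"
  have "reduced w"
    using w(1) subgroup.subset[OF K] by (auto simp: F2_carrier)
  moreover have "reduced ?c"
    using reduced_conj_pow_word x D(2) by simp
  moreover have "hd ?c \<noteq> inv_letter (last w)"
    using hd_conj_pow_word[OF j] by (simp add: inv_letter_def prod_eq_iff)
  ultimately have "w \<otimes>\<^bsub>F2\<^esub> ?c = w @ ?c"
    by (simp add: F2_mult_reduced reduced_append)
  moreover have "w \<otimes>\<^bsub>F2\<^esub> ?c \<in> K"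
    using subgroup.m_closed[OF K w(1) conj_pow_word_mem[OF K fin D]] x by simp
  ultimately show ?thesis
    by simp
qed

theorem lemma5p6:
  fixes K :: "letter list set"
  assumes "subgroup K F2"
    and "finite (rcosets\<^bsub>F2\<^esub> K)"
    and "\<exists>w\<in>K. odd (word_length w)"
  shows "\<exists>N. \<forall>n\<ge>N. \<exists>w\<in>K. word_length w = n"
proof -
  obtain w where w: "w \<in> K" "odd (length w)"
    using assms(3) by (auto simp: word_length_def)
  define D :: nat where "D = 2 * fact (card (rcosets\<^bsub>F2\<^esub> K))"
  have D: "fact (card (rcosets\<^bsub>F2\<^esub> K)) dvd D" "0 < D" "even D"
    by (simp_all add: D_def)
  let ?a = "(Ga, False)"
  have "\<exists>u\<in>K. length u = n" if n: "length w + D + 2 \<le> n" for n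
  proof (cases "even n")
    case True
    let ?j = "(n - D) div 2"
    have "conj_pow_word (Gb, False) ?j ?a D \<in> K"
      using conj_pow_word_mem[OF assms(1,2) D(1,2)] by simp
    moreover have "length (conj_pow_word (Gb, False) ?j ?a D) = n"
      using True D(3) n by (auto simp: length_conj_pow_word elim!: evenE)
    ultimately show ?thesis ..
  next
    case False
    let ?j = "(n - length w - D) div 2"
    have "0 < ?j" "w \<noteq> []"
      using n w(2) by auto
    then have "w @ conj_pow_word (Gb, snd (last w)) ?j ?a D \<in> K"
      using append_conj_pow_word_mem[OF assms(1,2) D(1,2) _ w(1)] by simp
    moreover have "length (w @ conj_pow_word (Gb, snd (last w)) ?j ?a D) = n"
      using False D(3) n w(2) by (auto simp: length_conj_pow_word elim!: evenE oddE)
    ultimately show ?thesis ..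
  qed
  then show ?thesis
    by (auto simp: word_length_def)
qed

end
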